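(* Let $y = \lambda_7^2\lambda_5\lambda_{14} + \lambda_7^2\lambda_9\lambda_{10} + \lambda_7\lambda_{11}\lambda_9\lambda_6 \in \Lambda_4$ and let $x \in H_{33}(B(\mathbb{Z}/2)^4)$ be the sum of the 62 monomials $a_4^{(t_4)}a_3^{(t_3)}a_2^{(t_2)}a_1^{(t_1)}$ with $(t_4,t_3,t_2,t_1)$ ranging over (14,5,7,7), (14,3,9,7), (14,3,5,11), (14,3,3,13), (13,6,7,7), (13,3,10,7), (13,3,6,11), (13,3,3,14), (11,6,9,7), (11,6,5,11), (11,6,3,13), (11,5,10,7), (11,5,6,11), (11,5,3,14), (10,9,7,7), (10,7,9,7), (10,7,5,11), (10,7,3,13), (10,5,11,7), (10,3,13,7), (9,10,7,7), (9,7,10,7), (9,7,6,11), (9,7,3,14), (9,6,11,7), (9,3,14,7), (7,10,9,7), (7,10,5,11), (7,10,3,13), (7,9,10,7), (7,9,6,11), (7,9,3,14), (7,6,13,7), (7,5,14,7), (6,13,7,7), (6,11,9,7), (6,11,5,11), (6,11,3,13), (6,9,7,11), (6,7,7,13), (6,5,11,11), (6,3,13,11), (5,14,7,7), (5,11,10,7), (5,11,6,11), (5,11,3,14), (5,10,7,11), (5,7,7,14), (5,6,11,11), (5,3,14,11), (3,14,9,7), (3,14,5,11), (3,14,3,13), (3,13,10,7), (3,13,6,11), (3,13,3,14), (3,10,7,13), (3,9,7,14), (3,6,11,13), (3,5,11,14), (3,3,14,13), (3,3,13,14). Then $x \in P_{\mathcal{A}}H_{33}(B(\mathbb{Z}/2)^4)$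 and $\varphi_4(x) = y$ in $\Lambda_4$. Consequently $x$ is an explicit preimage under the Singer transfer $\varphi_4$ of the indecomposable class $p_0 \in \mathrm{Ext}_{\mathcal{A}}^{4,37}(\mathbb{Z}/2,\mathbb{Z}/2)$, represented by $y$; in particular $p_0$ lies in the image of $\varphi_4$.
   Context: The Lambda algebra $\Lambda$ is the differential algebra over $\mathbb{Z}/2$ generated by $\lambda_t$, $t\ge 0$, subject to the Adem relations $\lambda_a\lambda_b = \sum_j\binom{j-b-1}{2j-a}\lambda_{a+b-j}\lambda_j$ for $a>2b$, with differential the derivation given by $\delta(\lambda_m) = \sum_{t\ge 0}\binom{m-1-t}{t+1}\lambda_{m-1-t}\lambda_t$; $\Lambda_k$ is the span of length-$k$ monomials, and its cohomology computes $\mathrm{Ext}_{\mathcal{A}}^{k,*}(\mathbb{Z}/2,\mathbb{Z}/2)$ ($\mathcal{A}$ the mod 2 Steenrod algebra). The element $y$ is a cocycle representing $p_0$. $H_*(B(\mathbb{Z}/2)^k)=\Gamma[a_k,\dots,a_1]$ is the divided power algebra with basis $a_k^{(t_k)}\cdots a_1^{(t_1)}$ of degree $\sum t_i$; dual Steenrod squares act on the right by $(a^{(t)})Sq_*^j = \binom{t-j}{j}a^{(t-j)}$ and the Cartan formula; $P_{\mathcal{A}}H_*$ consists of $x$ with $(x)Sq_*^{2^t} = 0$ for all $t\ge0$. The transfer $\varphi_k : H_*(B(\mathbb{Z}/2)^k)\to\Lambda_k$ is defined by $\varphi_1(a_1^{(t)})=\lambda_t$ and $\varphi_k(a_k^{(t_k)}\cdots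 a_1^{(t_1)}) = \sum_{i\ge t_1}\lambda_i\,\varphi_{k-1}((a_k^{(t_k)}\cdots a_2^{(t_2)})Sq_*^{i-t_1})$, with $a_k,\dots,a_2$ renamed $a_{k-1},\dots,a_1$ in the argument of $\varphi_{k-1}$. A class $[y]$ is in the image of $\varphi_k$ if $[y]=[\varphi_k(x)]$ for some $x\in P_{\mathcal{A}}H_*(B(\mathbb{Z}/2)^k)$. *)

theory Defs
  imports Main "HOL-Library.Z2"
begin

text \<open>Vectors over Z/2 with basis indexed by 'a are functions 'a \<Rightarrow> bit
  (coefficient functions; all vectors considered have finite support).\<close>

definition supp :: "('a \<Rightarrow> bit) \<Rightarrow> 'a set" where
  "supp x = {w. x w \<noteq> 0}"

definition lin :: "('a \<Rightarrow> 'b \<Rightarrow> bit) \<Rightarrow> ('a \<Rightarrow> bit) \<Rightarrow> 'b \<Rightarrow> bit" where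
  "lin f x = (\<lambda>v. \<Sum>w\<in>supp x. x w * f w v)"

definition basis_vec :: "'a \<Rightarrow> 'a \<Rightarrow> bit" where
  "basis_vec w = (\<lambda>v. if v = w then 1 else 0)"

text \<open>Divided power algebra H_*(B(Z/2)^k) = Gamma[a_k,...,a_1].
  The basis monomial a_k^(t_k) ... a_1^(t_1) is encoded by the list [t_1, t_2, ..., t_k]
  (note: reversed order, so that a_1 comes first).
  Dual Steenrod square Sq_*^j on a basis monomial, via
  (a^(t)) Sq_*^i = binom(t-i, i) a^(t-i) and the Cartan formula.\<close>
fun sqm :: "nat \<Rightarrow> nat list \<Rightarrow> nat list \<Rightarrow> bit" where
  "sqm j [] = (\<lambda>v. if v = [] \<and> j = 0 then 1 else 0)"
| "sqm j (t # ts) = (\<lambda>v. case v of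
       [] \<Rightarrow> 0
     | s # vs \<Rightarrow> (if s \<le> t \<and> t - s \<le> j
                  then of_nat (s choose (t - s)) * sqm (j - (t - s)) ts vs
                  else 0))"

definition Sq_dual :: "nat \<Rightarrow> (nat list \<Rightarrow> bit) \<Rightarrow> nat list \<Rightarrow> bit" where
  "Sq_dual j x = lin (sqm j) x"

definition is_A_primitive :: "(nat list \<Rightarrow> bit) \<Rightarrow> bool" where
  "is_A_primitive x \<longleftrightarrow> (\<forall>t. Sq_dual (2 ^ t) x = (\<lambda>_. 0))"

definition homogeneous_H :: "nat \<Rightarrow> nat \<Rightarrow> (nat list \<Rightarrow> bit) \<Rightarrow> bool" where
  "homogeneous_H k d x \<longleftrightarrow> finite (supp x) \<and>
     (\<forall>ts\<in>supp x. length ts = k \<and> sum_list ts = d)"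

text \<open>Elements of the free (tensor) algebra over Z/2 on lambda_0, lambda_1, ...:
  the word [i_1,...,i_k] stands for lambda_{i_1} ... lambda_{i_k}.

  Singer transfer phi_k on basis monomials (list [t_1,...,t_k]):
  phi_k(a_k^(t_k)...a_1^(t_1)) = sum_{i >= t_1} lambda_i phi_{k-1}((a_k^(t_k)...a_2^(t_2)) Sq_*^{i-t_1}).\<close>
primrec phi :: "nat \<Rightarrow> nat list \<Rightarrow> nat list \<Rightarrow> bit" where
  "phi 0 ts = (\<lambda>w. if w = [] \<and> ts = [] then 1 else 0)"
| "phi (Suc k) ts = (case ts of
       [] \<Rightarrow> (\<lambda>w. 0)
     | t # us \<Rightarrow> (\<lambda>w. case w of
          [] \<Rightarrow> 0
        | i # w' \<Rightarrow> (if t \<le> i then lin (phi k) (sqm (i - t) us) w' else 0)))"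

definition phi_lin :: "nat \<Rightarrow> (nat list \<Rightarrow> bit) \<Rightarrow> nat list \<Rightarrow> bit" where
  "phi_lin k x = lin (phi k) x"

text \<open>Adem relation element lambda_a lambda_b + sum_j binom(j-b-1, 2j-a) lambda_{a+b-j} lambda_j
  (for a > 2b; the summation range is exactly where the binomial can be nonzero).\<close>
definition adem_rel :: "nat \<Rightarrow> nat \<Rightarrow> nat list \<Rightarrow> bit" where
  "adem_rel a b = (\<lambda>w. basis_vec [a, b] w +
     (\<Sum>j\<in>{j. a \<le> 2 * j \<and> j + b + 1 \<le> a}.
         of_nat ((j - b - 1) choose (2 * j - a)) * basis_vec [a + b - j, j] w))"

text \<open>u * r * v for words u, v and an element r of the free algebra.\<close>
definition sandwich :: "nat list \<Rightarrow> (nat list \<Rightarrow> bit) \<Rightarrow> nat list \<Rightarrow> nat list \<Rightarrow> bit" where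
  "sandwich u r v = (\<lambda>w. if length u + length v \<le> length w \<and> take (length u) w = u
        \<and> drop (length w - length v) w = v
     then r (drop (length u) (take (length w - length v) w)) else 0)"

text \<open>Two-sided ideal of the free algebra generated by the Adem relations
  (over Z/2 it is the span of all u * R * v).\<close>
inductive_set adem_ideal :: "(nat list \<Rightarrow> bit) set" where
  zero: "(\<lambda>_. 0) \<in> adem_ideal"
| step: "r \<in> adem_ideal \<Longrightarrow> 2 * b < a \<Longrightarrow>
           (\<lambda>w. r w + sandwich u (adem_rel a b) v w) \<in> adem_ideal"

definition lambda_eq :: "(nat list \<Rightarrow> bit) \<Rightarrow> (nat list \<Rightarrow> bit) \<Rightarrow> bool" where
  "lambda_eq p q \<longleftrightarrow> (\<lambda>w. p w - q w) \<in> adem_ideal"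

definition vec_of_list :: "'a list \<Rightarrow> 'a \<Rightarrow> bit" where
  "vec_of_list ws = (\<lambda>w. \<Sum>u\<leftarrow>ws. basis_vec u w)"

end

(* The transfer satisfies phi_{k+1}(x) = sum_i lambda_i phi_k(c_i(x)), where c_i(x) is obtained
   from x by stripping a_1^(t_1) and applying Sq_*^(i - t_1) to the rest (c_i = 0 if i < t_1).
   For the given x every c_i(x) cancels mod 2 except c_7(x), a sum of 24 monomials in three
   variables whose image under phi_3 is
     lambda_7 lambda_5 lambda_14 + lambda_7 lambda_9 lambda_10 + lambda_11 lambda_9 lambda_6.
   Hence phi_4(x) = y already in the free algebra, without using any Adem relation.  Likewise
   Sq_*^(2^t) x cancels for 2^t <= 32 and vanishes for degree reasons beyond.  All of this is a
   finite computation on lists of monomials, each list standing for the sum of its entries mod 2. *)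

theory Submission
  imports Defs "HOL-Library.List_Lexorder"
begin

(* Keep sums and products in bit as ring operations instead of xor and and. *)
declare add_bit_eq_xor [simp del] mult_bit_eq_and [simp del]

lemma bit_add_self [simp]: "(a::bit) + a = 0"
  by (cases a) simp_all

lemma of_nat_bit: "(of_nat n :: bit) = of_bool (odd n)"
  by (induction n) auto

lemma vec_of_list_count: "vec_of_list xs w = of_nat (count_list xs w)"
  by (induction xs) (simp_all add: vec_of_list_def basis_vec_def)

lemma supp_vec_of_list: "supp (vec_of_list xs) \<subseteq> set xs"
  by (auto simp: supp_def vec_of_list_count intro: ccontr)

lemma finite_supp_vec_of_list: "finite (supp (vec_of_list xs))"
  by (rule finite_subset[OF supp_vec_of_list]) simp

lemma vec_of_list_notin: "w \<notin> set xs \<Longrightarrow> vec_of_list xs w = 0"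
  using supp_vec_of_list[of xs] by (auto simp: supp_def)

lemma vec_of_list_Nil: "vec_of_list [] = (\<lambda>_. 0)"
  by (simp add: vec_of_list_def)

lemma vec_of_list_Cons: "vec_of_list (x # xs) w = basis_vec x w + vec_of_list xs w"
  by (simp add: vec_of_list_def)

lemma vec_of_list_append: "vec_of_list (xs @ ys) w = vec_of_list xs w + vec_of_list ys w"
  by (simp add: vec_of_list_def)

lemma lin_eq_sum_superset:
  assumes "finite S" "supp x \<subseteq> S"
  shows "lin f x v = (\<Sum>w\<in>S. x w * f w v)"
  unfolding lin_def using assms by (intro sum.mono_neutral_left) (auto simp: supp_def)

lemma lin_add:
  assumes "finite (supp a)" "finite (supp b)"
  shows "lin f (\<lambda>w. a w + b w) v = lin f a v + lin f b v"
proof -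
  let ?S = "supp a \<union> supp b"
  have "supp (\<lambda>w. a w + b w) \<subseteq> ?S"
    by (auto simp: supp_def)
  then have "lin f (\<lambda>w. a w + b w) v = (\<Sum>w\<in>?S. (a w + b w) * f w v)"
    using assms by (intro lin_eq_sum_superset) auto
  also have "\<dots> = (\<Sum>w\<in>?S. a w * f w v) + (\<Sum>w\<in>?S. b w * f w v)"
    by (simp add: distrib_right sum.distrib)
  also have "\<dots> = lin f a v + lin f b v"
    using assms lin_eq_sum_superset[of ?S a f v] lin_eq_sum_superset[of ?S b f v] by simp
  finally show ?thesis .
qed

lemma lin_basis_vec: "lin f (basis_vec x) v = f x v"
  by (simp add: lin_def supp_def basis_vec_def)

lemma lin_vec_of_list: "lin f (vec_of_list xs) v = (\<Sum>w\<leftarrow>xs. f w v)"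
proof (induction xs)
  case Nil
  show ?case
    by (simp add: lin_def supp_def vec_of_list_Nil)
next
  case (Cons x xs)
  have "vec_of_list (x # xs) = (\<lambda>w. basis_vec x w + vec_of_list xs w)"
    by (simp add: vec_of_list_Cons fun_eq_iff)
  moreover have "finite (supp (basis_vec x))"
    by (simp add: supp_def basis_vec_def)
  ultimately have
    "lin f (vec_of_list (x # xs)) v = lin f (basis_vec x) v + lin f (vec_of_list xs) v"
    using lin_add finite_supp_vec_of_list by metis
  then show ?case
    using Cons by (simp add: lin_basis_vec)
qed

lemma lin_vec_of_list_vec_of_list:
  "lin (\<lambda>w. vec_of_list (g w)) (vec_of_list xs) = vec_of_list (concat (map g xs))"
proof
  fix v
  have "(\<Sum>w\<leftarrow>xs. vec_of_list (g w) v) = vec_of_list (concat (map g xs)) v"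
    by (induction xs) (simp_all add: vec_of_list_append vec_of_list_Nil)
  then show "lin (\<lambda>w. vec_of_list (g w)) (vec_of_list xs) v = vec_of_list (concat (map g xs)) v"
    by (simp add: lin_vec_of_list)
qed

lemma vec_of_list_map_Cons:
  "vec_of_list (map (Cons a) L) (s # w) = (if a = s then vec_of_list L w else 0)"
  by (induction L) (simp_all add: vec_of_list_Cons vec_of_list_Nil basis_vec_def)

lemma vec_of_list_concat_map_Cons:
  assumes "distinct S"
  shows "vec_of_list (concat (map (\<lambda>a. map (Cons a) (B a)) S)) (s # w) =
    (if s \<in> set S then vec_of_list (B s) w else 0)"
  using assms
  by (induction S)
    (auto simp: vec_of_list_Nil vec_of_list_append vec_of_list_map_Cons vec_of_list_notin)

fun toggle :: "'a::linorder \<Rightarrow> 'a list \<Rightarrow> 'a list" where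
  "toggle x [] = [x]"
| "toggle x (y # ys) = (if x = y then ys else if x < y then x # y # ys else y # toggle x ys)"

definition reduce_mod2 :: "'a::linorder list \<Rightarrow> 'a list" where
  "reduce_mod2 xs = foldr toggle xs []"

lemma reduce_mod2_Nil: "reduce_mod2 [] = []"
  by (simp add: reduce_mod2_def)

lemma vec_of_list_toggle: "vec_of_list (toggle x ys) w = vec_of_list (x # ys) w"
proof (induction ys)
  case (Cons y ys)
  have "basis_vec x w + (basis_vec x w + vec_of_list ys w) = vec_of_list ys w"
    by (simp add: add.assoc[symmetric])
  with Cons.IH show ?case
    by (simp add: vec_of_list_Cons add.left_commute)
qed simp

lemma vec_of_list_reduce_mod2: "vec_of_list (reduce_mod2 xs) = vec_of_list xs"
proof
  fix w
  show "vec_of_list (reduce_mod2 xs) w = vec_of_list xs w"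
    by (induction xs) (simp_all add: reduce_mod2_def vec_of_list_toggle vec_of_list_Cons)
qed

definition sq_targets :: "nat \<Rightarrow> nat list" where
  "sq_targets t = filter (\<lambda>s. odd (s choose (t - s))) [0..<t + 1]"

lemma mem_sq_targets_iff: "s \<in> set (sq_targets t) \<longleftrightarrow> s \<le> t \<and> odd (s choose (t - s))"
  by (auto simp: sq_targets_def)

lemma distinct_sq_targets: "distinct (sq_targets t)"
  by (simp add: sq_targets_def)

(* The default rule upt_Suc unfolds [i..<j] from the right and leaves Suc-terms behind;
   for evaluation on numerals we unfold from the left and fold Suc back into numerals. *)
lemma upt_eq_Cons_add1: "i < j \<Longrightarrow> [i..<j] = i # [i + 1..<j]"
  by (simp add: upt_conv_Cons)

lemmas upt_numeral_simps = upt_eq_Cons_add1 Suc_numeral One_nat_def[symmetric]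

lemma sq_targets_values:
  "sq_targets 0 = [0]" "sq_targets 1 = [1]" "sq_targets 2 = [1, 2]" "sq_targets 3 = [3]"
  "sq_targets 4 = [2, 3, 4]" "sq_targets 5 = [3, 5]" "sq_targets 6 = [3, 5, 6]"
  "sq_targets 7 = [7]" "sq_targets 8 = [4, 6, 7, 8]" "sq_targets 9 = [5, 7, 9]"
  "sq_targets 10 = [5, 6, 7, 9, 10]" "sq_targets 11 = [7, 11]"
  "sq_targets 12 = [6, 7, 10, 11, 12]" "sq_targets 13 = [7, 11, 13]"
  "sq_targets 14 = [7, 11, 13, 14]"
  unfolding sq_targets_def
  by (simp_all add: upt_numeral_simps binomial_fact' fact_numeral binomial_eq_0
      del: upt_Suc One_nat_def binomial_Suc_Suc)

fun sq_terms :: "nat \<Rightarrow> nat list \<Rightarrow> nat list list" where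
  "sq_terms j [] = (if j = 0 then [[]] else [])"
| "sq_terms j (t # ts) = concat (map (\<lambda>s. map (Cons s)
     (if t - s \<le> j then sq_terms (j - (t - s)) ts else [])) (sq_targets t))"

lemma sum_list_mem_sq_terms: "v \<in> set (sq_terms j ts) \<Longrightarrow> sum_list v + j = sum_list ts"
proof (induction ts arbitrary: j v)
  case (Cons t ts)
  then obtain s v' where
    "v = s # v'" "s \<le> t" "t - s \<le> j" "v' \<in> set (sq_terms (j - (t - s)) ts)"
    by (auto simp: mem_sq_targets_iff split: if_splits)
  with Cons.IH show ?case
    by fastforce
qed (simp split: if_splits)

lemma sq_terms_eq_Nil:
  assumes "sum_list ts < j"
  shows "sq_terms j ts = []"
proof -
  have "v \<notin> set (sq_terms j ts)" for v
    using sum_list_mem_sq_terms[of v j ts] assms by auto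
  then show ?thesis
    by (metis list.set_intros(1) neq_Nil_conv)
qed

lemma sqm_eq_vec_of_list: "sqm j ts = vec_of_list (sq_terms j ts)"
proof (induction ts arbitrary: j)
  case Nil
  show ?case
    by (auto simp: fun_eq_iff vec_of_list_def basis_vec_def)
next
  case (Cons t ts)
  show ?case
  proof
    fix v
    show "sqm j (t # ts) v = vec_of_list (sq_terms j (t # ts)) v"
    proof (cases v)
      case Nil
      then show ?thesis
        by (auto intro!: vec_of_list_notin)
    next
      case (Cons s w)
      then show ?thesis
        using Cons.IH
        by (auto simp: vec_of_list_concat_map_Cons distinct_sq_targets mem_sq_targets_iff
            of_nat_bit vec_of_list_Nil)
    qed
  qed
qed

lemma Sq_dual_vec_of_list:
  "Sq_dual j (vec_of_list xs) = vec_of_list (concat (map (sq_terms j) xs))"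
  unfolding Sq_dual_def sqm_eq_vec_of_list[abs_def] by (rule lin_vec_of_list_vec_of_list)

definition lambda_coeff_terms :: "nat \<Rightarrow> nat list \<Rightarrow> nat list list" where
  "lambda_coeff_terms i ts =
     (case ts of [] \<Rightarrow> [] | t # us \<Rightarrow> if t \<le> i then sq_terms (i - t) us else [])"

lemma lambda_coeff_terms_eq_Nil: "sum_list ts < i \<Longrightarrow> lambda_coeff_terms i ts = []"
  by (auto simp: lambda_coeff_terms_def sq_terms_eq_Nil split: list.split)

lemma phi_Suc_Nil: "phi (Suc k) ts [] = 0"
  by (simp split: list.split)

lemma phi_Suc_Cons:
  "phi (Suc k) ts (i # w) = lin (phi k) (vec_of_list (lambda_coeff_terms i ts)) w"
  by (simp add: lambda_coeff_terms_def sqm_eq_vec_of_list lin_vec_of_list split: list.split)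

fun phi_terms :: "nat \<Rightarrow> nat list \<Rightarrow> nat list list" where
  "phi_terms 0 ts = (if ts = [] then [[]] else [])"
| "phi_terms (Suc k) ts = concat (map (\<lambda>i. map (Cons i)
     (concat (map (phi_terms k) (lambda_coeff_terms i ts)))) [0..<sum_list ts + 1])"

lemma phi_eq_vec_of_list: "phi k ts = vec_of_list (phi_terms k ts)"
proof (induction k arbitrary: ts)
  case 0
  show ?case
    by (auto simp: fun_eq_iff vec_of_list_def basis_vec_def)
next
  case (Suc k)
  show ?case
  proof
    fix w
    show "phi (Suc k) ts w = vec_of_list (phi_terms (Suc k) ts) w"
    proof (cases w)
      case Nil
      have "[] \<notin> set (phi_terms (Suc k) ts)"
        by (auto simp del: upt_Suc)
      with Nil show ?thesis
        by (metis phi_Suc_Nil vec_of_list_notin)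
    next
      case (Cons i w')
      have "phi k = (\<lambda>v. vec_of_list (phi_terms k v))"
        using Suc.IH by (simp add: fun_eq_iff)
      then have "phi (Suc k) ts (i # w') =
          vec_of_list (concat (map (phi_terms k) (lambda_coeff_terms i ts))) w'"
        by (simp only: phi_Suc_Cons lin_vec_of_list_vec_of_list)
      also have "\<dots> = vec_of_list (phi_terms (Suc k) ts) (i # w')"
        by (cases "i \<le> sum_list ts")
          (simp_all del: upt_Suc
            add: vec_of_list_concat_map_Cons lambda_coeff_terms_eq_Nil vec_of_list_Nil)
      finally show ?thesis
        using Cons by simp
    qed
  qed
qed

lemma phi_terms_pos:
  "0 < k \<Longrightarrow> phi_terms k ts = concat (map (\<lambda>i. map (Cons i)
     (concat (map (phi_terms (k - 1)) (lambda_coeff_terms i ts)))) [0..<sum_list ts + 1])"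
  by (cases k) (simp_all del: upt_Suc)

lemma phi_lin_vec_of_list:
  "phi_lin k (vec_of_list xs) = vec_of_list (concat (map (phi_terms k) xs))"
  unfolding phi_lin_def phi_eq_vec_of_list[abs_def] by (rule lin_vec_of_list_vec_of_list)

lemma phi_lin_Suc_Nil: "phi_lin (Suc k) (vec_of_list xs) [] = 0"
  by (simp add: phi_lin_def lin_vec_of_list phi_Suc_Nil del: phi.simps)

lemma phi_lin_Suc_Cons:
  "phi_lin (Suc k) (vec_of_list xs) (i # w) =
    phi_lin k (vec_of_list (concat (map (lambda_coeff_terms i) xs))) w"
  by (induction xs) (simp_all add: phi_lin_def lin_vec_of_list phi_Suc_Cons del: phi.simps)

lemma phi_lin_Suc_single_coeff:
  assumes "\<And>j. j \<noteq> i \<Longrightarrow>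
      phi_lin k (vec_of_list (concat (map (lambda_coeff_terms j) xs))) = (\<lambda>_. 0)"
    and "phi_lin k (vec_of_list (concat (map (lambda_coeff_terms i) xs))) = vec_of_list ys"
  shows "phi_lin (Suc k) (vec_of_list xs) = vec_of_list (map (Cons i) ys)"
proof
  fix w
  show "phi_lin (Suc k) (vec_of_list xs) w = vec_of_list (map (Cons i) ys) w"
  proof (cases w)
    case Nil
    have "[] \<notin> set (map (Cons i) ys)"
      by auto
    with Nil show ?thesis
      by (simp add: phi_lin_Suc_Nil vec_of_list_notin)
  next
    case (Cons j w')
    then show ?thesis
      using assms by (cases "i = j") (auto simp: phi_lin_Suc_Cons vec_of_list_map_Cons)
  qed
qed

lemma lambda_eq_refl: "lambda_eq p p"
  by (simp add: lambda_eq_def adem_ideal.zero)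

definition x_terms :: "nat list list" where
  "x_terms = map rev
      [[14,5,7,7], [14,3,9,7], [14,3,5,11], [14,3,3,13], [13,6,7,7], [13,3,10,7], [13,3,6,11],
       [13,3,3,14], [11,6,9,7], [11,6,5,11], [11,6,3,13], [11,5,10,7], [11,5,6,11], [11,5,3,14],
       [10,9,7,7], [10,7,9,7], [10,7,5,11], [10,7,3,13], [10,5,11,7], [10,3,13,7], [9,10,7,7],
       [9,7,10,7], [9,7,6,11], [9,7,3,14], [9,6,11,7], [9,3,14,7], [7,10,9,7], [7,10,5,11],
       [7,10,3,13], [7,9,10,7], [7,9,6,11], [7,9,3,14], [7,6,13,7], [7,5,14,7], [6,13,7,7],
       [6,11,9,7], [6,11,5,11], [6,11,3,13], [6,9,7,11], [6,7,7,13], [6,5,11,11], [6,3,13,11],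
       [5,14,7,7], [5,11,10,7], [5,11,6,11], [5,11,3,14], [5,10,7,11], [5,7,7,14], [5,6,11,11],
       [5,3,14,11], [3,14,9,7], [3,14,5,11], [3,14,3,13], [3,13,10,7], [3,13,6,11], [3,13,3,14],
       [3,10,7,13], [3,9,7,14], [3,6,11,13], [3,5,11,14], [3,3,14,13], [3,3,13,14]]"

lemma x_terms_homogeneous: "ts \<in> set x_terms \<Longrightarrow> length ts = 4 \<and> sum_list ts = 33"
  by (auto simp: x_terms_def)

lemmas x_terms_eval_simps = x_terms_def reduce_mod2_def sq_targets_values lambda_coeff_terms_def
  phi_terms_pos upt_numeral_simps

lemma Sq_dual_x_terms_vanish:
  assumes "t \<le> 5"
  shows "reduce_mod2 (concat (map (sq_terms (2 ^ t)) x_terms)) = []"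
proof -
  have "list_all (\<lambda>t. reduce_mod2 (concat (map (sq_terms (2 ^ t)) x_terms)) = []) [0..<6]"
    by (simp add: x_terms_eval_simps del: upt_Suc One_nat_def)
  with assms show ?thesis
    by (simp add: list_all_iff)
qed

lemma lambda_coeff_x_terms_vanish:
  assumes "i \<noteq> 7"
  shows "reduce_mod2 (concat (map (lambda_coeff_terms i) x_terms)) = []"
proof (cases "i < 34")
  case True
  have "list_all (\<lambda>i. i = 7 \<or> reduce_mod2 (concat (map (lambda_coeff_terms i) x_terms)) = [])
      [0..<34]"
    by (simp add: x_terms_eval_simps del: upt_Suc One_nat_def)
  with True assms show ?thesis
    by (auto simp: list_all_iff)
next
  case False
  then have "concat (map (lambda_coeff_terms i) x_terms) = []"
    using x_terms_homogeneous by (auto intro!: lambda_coeff_terms_eq_Nil)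
  then show ?thesis
    by (simp only: reduce_mod2_Nil)
qed

lemma phi_lambda_coeff_7_x_terms:
  "reduce_mod2 (concat (map (phi_terms 3) (concat (map (lambda_coeff_terms 7) x_terms)))) =
    [[7, 5, 14], [7, 9, 10], [11, 9, 6]]"
  by (simp add: x_terms_eval_simps del: upt_Suc One_nat_def)

lemma phi_lin_x_terms:
  "phi_lin 4 (vec_of_list x_terms) = vec_of_list [[7, 7, 5, 14], [7, 7, 9, 10], [7, 11, 9, 6]]"
proof -
  have "phi_lin 3 (vec_of_list (concat (map (lambda_coeff_terms j) x_terms))) = (\<lambda>_. 0)"
    if "j \<noteq> 7" for j
    using lambda_coeff_x_terms_vanish[OF that]
    by (metis vec_of_list_reduce_mod2 phi_lin_vec_of_list concat.simps(1) list.map(1) vec_of_list_Nil)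
  moreover have "phi_lin 3 (vec_of_list (concat (map (lambda_coeff_terms 7) x_terms))) =
      vec_of_list [[7, 5, 14], [7, 9, 10], [11, 9, 6]]"
    unfolding phi_lin_vec_of_list phi_lambda_coeff_7_x_terms[symmetric] vec_of_list_reduce_mod2 ..
  ultimately have "phi_lin (Suc 3) (vec_of_list x_terms) =
      vec_of_list (map (Cons 7) [[7, 5, 14], [7, 9, 10], [11, 9, 6]])"
    by (rule phi_lin_Suc_single_coeff)
  then show ?thesis
    by (simp add: Suc_numeral)
qed

lemma is_A_primitive_x_terms: "is_A_primitive (vec_of_list x_terms)"
  unfolding is_A_primitive_def
proof
  fix t :: nat
  show "Sq_dual (2 ^ t) (vec_of_list x_terms) = (\<lambda>_. 0)"
  proof (cases "t \<le> 5")
    case True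
    have "Sq_dual (2 ^ t) (vec_of_list x_terms) =
        vec_of_list (reduce_mod2 (concat (map (sq_terms (2 ^ t)) x_terms)))"
      by (simp only: Sq_dual_vec_of_list vec_of_list_reduce_mod2)
    then show ?thesis
      by (simp only: Sq_dual_x_terms_vanish[OF True] vec_of_list_Nil)
  next
    case False
    have "(2::nat) ^ 6 \<le> 2 ^ t"
      using False by (intro power_increasing) auto
    then have "sum_list ts < 2 ^ t" if "ts \<in> set x_terms" for ts
      using x_terms_homogeneous[OF that] by simp
    then have "concat (map (sq_terms (2 ^ t)) x_terms) = []"
      by (auto intro!: sq_terms_eq_Nil)
    then show ?thesis
      by (simp only: Sq_dual_vec_of_list vec_of_list_Nil)
  qed
qed

lemma homogeneous_x_terms: "homogeneous_H 4 33 (vec_of_list x_terms)"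
  using supp_vec_of_list[of x_terms] x_terms_homogeneous
  by (auto simp: homogeneous_H_def finite_supp_vec_of_list)

theorem mainTheorem4:
  fixes x y :: "nat list \<Rightarrow> bit"
  assumes "y = vec_of_list [[7,7,5,14], [7,7,9,10], [7,11,9,6]]"
    and "x = vec_of_list (map rev
      [[14,5,7,7], [14,3,9,7], [14,3,5,11], [14,3,3,13], [13,6,7,7], [13,3,10,7], [13,3,6,11],
       [13,3,3,14], [11,6,9,7], [11,6,5,11], [11,6,3,13], [11,5,10,7], [11,5,6,11], [11,5,3,14],
       [10,9,7,7], [10,7,9,7], [10,7,5,11], [10,7,3,13], [10,5,11,7], [10,3,13,7], [9,10,7,7],
       [9,7,10,7], [9,7,6,11], [9,7,3,14], [9,6,11,7], [9,3,14,7], [7,10,9,7], [7,10,5,11],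
       [7,10,3,13], [7,9,10,7], [7,9,6,11], [7,9,3,14], [7,6,13,7], [7,5,14,7], [6,13,7,7],
       [6,11,9,7], [6,11,5,11], [6,11,3,13], [6,9,7,11], [6,7,7,13], [6,5,11,11], [6,3,13,11],
       [5,14,7,7], [5,11,10,7], [5,11,6,11], [5,11,3,14], [5,10,7,11], [5,7,7,14], [5,6,11,11],
       [5,3,14,11], [3,14,9,7], [3,14,5,11], [3,14,3,13], [3,13,10,7], [3,13,6,11], [3,13,3,14],
       [3,10,7,13], [3,9,7,14], [3,6,11,13], [3,5,11,14], [3,3,14,13], [3,3,13,14]])"
  shows "homogeneous_H 4 33 x \<and> is_A_primitive x \<and> lambda_eq (phi_lin 4 x) y"
proof -
  have x: "x = vec_of_list x_terms"
    using assms(2) unfolding x_terms_def .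
  show ?thesis
    unfolding x assms(1) phi_lin_x_terms
    using homogeneous_x_terms is_A_primitive_x_terms lambda_eq_refl by blast
qed

end
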